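(* For every word $\omega\in[n]^*$ and every $j\in[n]$: (1) $a^j_\omega-e_j\in B_\omega$; (2) $M_\omega a^j_\omega=u_\omega+e_j\in e_j+M_\omega B_\omega$; (3) $a^j_\omega\in\delta^j_\omega+B_\omega$.
   Context: Let $[n]=\{1,\dots,n\}$, $e_1,\dots,e_n$ the standard basis of $\mathbb{Z}^n$; $\varepsilon$ is the empty word, $*$ concatenation. For words $\omega$ over $[n]$ define recursively $a^i_\omega,\delta^i_\omega\in\mathbb{Z}^n$: $a^i_\varepsilon=\delta^i_\varepsilon=e_i$; $a^i_{\omega*j}=a^i_\omega$ if $i\ne j$, $a^j_{\omega*j}=a^j_\omega+\delta^j_\omega$; $\delta^j_{\omega*j}=\delta^j_\omega$, $\delta^i_{\omega*j}=\delta^i_\omega-\delta^j_\omega$ for $i\ne j$. Let $B_\varepsilon=\{0\}$, $B_{\omega*j}=B_\omega+\{0,\delta^j_\omega\}$ (Minkowski sum). Let $M_\omega=(\delta^1_\omega\ \cdots\ \delta^n_\omega)^{-1}$ (inverse of the matrix with columns $\delta^i_\omega$). For $k\in[n]$ let $D^k=\mathrm{id}+e_k(\mathbb{1}-e_k)^T$ with $\mathbb{1}=(1,\dots,1)^T$. Define $u_\varepsilon=0$, $u_{\omega*j}=e_j+D^j u_\omega$. *)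

theory Defs
  imports "HOL-Analysis.Analysis"
begin

text \<open>Words over [n] are lists over a finite type 'n (the index set [n]);
  the word omega*j is omega @ [j].  The auxiliary functions below take the
  REVERSED word, so that the last letter is the head of the list.\<close>

definition ev :: "'n::finite \<Rightarrow> int^'n" where
  "ev i = axis i 1"

fun deltaR :: "'n::finite list \<Rightarrow> 'n \<Rightarrow> int^'n" where
  "deltaR [] i = ev i"
| "deltaR (j # w) i = (if i = j then deltaR w j else deltaR w i - deltaR w j)"

fun aR :: "'n::finite list \<Rightarrow> 'n \<Rightarrow> int^'n" where
  "aR [] i = ev i"
| "aR (j # w) i = (if i = j then aR w j + deltaR w j else aR w i)"

fun BR :: "'n::finite list \<Rightarrow> (int^'n) set" where
  "BR [] = {0}"
| "BR (j # w) = {b + c | b c. b \<in> BR w \<and> c \<in> {0, deltaR w j}}"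

definition Dmat :: "'n::finite \<Rightarrow> int^'n^'n" where
  "Dmat k = mat 1 + (\<chi> r c. (ev k $ r) * ((vec 1 - ev k) $ c))"

fun uR :: "'n::finite list \<Rightarrow> int^'n" where
  "uR [] = 0"
| "uR (j # w) = ev j + Dmat j *v uR w"

definition delta :: "'n::finite list \<Rightarrow> 'n \<Rightarrow> int^'n" where
  "delta w i = deltaR (rev w) i"

definition avec :: "'n::finite list \<Rightarrow> 'n \<Rightarrow> int^'n" where
  "avec w i = aR (rev w) i"

definition Bset :: "'n::finite list \<Rightarrow> (int^'n) set" where
  "Bset w = BR (rev w)"

definition uvec :: "'n::finite list \<Rightarrow> int^'n" where
  "uvec w = uR (rev w)"

definition Mmat :: "'n::finite list \<Rightarrow> real^'n^'n" where
  "Mmat w = matrix_inv (\<chi> r c. real_of_int (delta w c $ r))"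

definition rv :: "int^'n \<Rightarrow> real^'n" where
  "rv x = (\<chi> i. real_of_int (x $ i))"

end

theory Submission
  imports Defs
begin

text \<open>Let Delta_w be the matrix with columns delta^i_w, so that M_w is its inverse.
  Appending a letter k acts on the deltas by the column operation Delta_(w*k) = Delta_w C^k
  with C^k the inverse of D^k.  Hence every Delta_w is unimodular, and
  Delta_(w*k) u_(w*k) = Delta_w C^k (e_k + D^k u_w) = Delta_w u_w + delta^k_w,
  so Delta_w u_w is a sum of deltas chosen along the word, i.e. a point of B_w.
  The same induction gives a^j_w = Delta_w u_w + delta^j_w = Delta_w (u_w + e_j), from
  which the last three claims follow; the first is a direct induction.\<close>

definition of_int_mat :: "int^'n^'m \<Rightarrow> 'a::ring_1^'n^'m" where
  "of_int_mat A = (\<chi> i j. of_int (A $ i $ j))"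

lemma of_int_mat_mult: "of_int_mat (A ** B) = (of_int_mat A ** of_int_mat B :: 'a::ring_1^_^_)"
  by (simp add: of_int_mat_def matrix_matrix_mult_def vec_eq_iff)

lemma of_int_mat_mat_1: "of_int_mat (mat 1) = (mat 1 :: 'a::ring_1^_^_)"
  by (simp add: of_int_mat_def mat_def vec_eq_iff)

lemma matrix_inv_mult_left:
  assumes "invertible A"
  shows "matrix_inv A ** A = mat 1"
  using assms unfolding invertible_def matrix_inv_def by (rule someI2_ex) auto

lemma ev_nth: "ev k $ c = (if c = k then 1 else 0)"
  by (simp add: ev_def axis_def)

lemma matrix_mult_ev: "A *v ev i = (\<chi> a. A $ a $ i)"
  by (simp add: matrix_vector_mult_def vec_eq_iff ev_nth if_distrib cong: if_cong)

lemma rv_add: "rv (x + y) = rv x + rv y"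
  by (simp add: rv_def vec_eq_iff)

lemma rv_matrix_mult: "rv (A *v x) = of_int_mat A *v rv x"
  by (simp add: rv_def of_int_mat_def matrix_vector_mult_def vec_eq_iff)

definition Cmat :: "'n::finite \<Rightarrow> int^'n^'n" where
  "Cmat k = mat 1 - (\<chi> r c. (ev k $ r) * ((vec 1 - ev k) $ c))"

lemma Cmat_nth: "Cmat k $ m $ c = (if m = c then 1 else 0) - (if m = k \<and> c \<noteq> k then 1 else 0)"
  by (simp add: Cmat_def mat_def ev_nth)

lemma Dmat_nth: "Dmat k $ m $ c = (if m = c then 1 else 0) + (if m = k \<and> c \<noteq> k then 1 else 0)"
  by (simp add: Dmat_def mat_def ev_nth)

lemma matrix_mult_Cmat_nth:
  "(A ** Cmat k) $ a $ c = A $ a $ c - (if c = k then 0 else A $ a $ k)"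
  by (simp add: matrix_matrix_mult_def Cmat_nth right_diff_distrib sum_subtractf
      if_distrib[of "(*) _"] cong: if_cong)

lemma matrix_mult_Dmat_nth:
  "(A ** Dmat k) $ a $ c = A $ a $ c + (if c = k then 0 else A $ a $ k)"
  by (simp add: matrix_matrix_mult_def Dmat_nth distrib_left sum.distrib
      if_distrib[of "(*) _"] cong: if_cong)

lemma Cmat_mult_Dmat: "Cmat k ** Dmat k = mat 1"
  by (simp add: matrix_mult_Dmat_nth vec_eq_iff Cmat_nth mat_def)

definition DeltaR :: "'n::finite list \<Rightarrow> int^'n^'n" where
  "DeltaR r = (\<chi> a c. deltaR r c $ a)"

lemma DeltaR_mult_ev: "DeltaR r *v ev i = deltaR r i"
  by (simp add: matrix_mult_ev DeltaR_def vec_eq_iff)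

lemma DeltaR_Nil: "DeltaR [] = mat 1"
  by (simp add: DeltaR_def mat_def vec_eq_iff ev_nth)

lemma DeltaR_Cons: "DeltaR (k # r) = DeltaR r ** Cmat k"
  by (simp add: matrix_mult_Cmat_nth vec_eq_iff DeltaR_def)

lemma DeltaR_Cons_mult_Dmat: "DeltaR (k # r) *v (Dmat k *v x) = DeltaR r *v x"
proof -
  have "DeltaR (k # r) *v (Dmat k *v x) = DeltaR r *v ((Cmat k ** Dmat k) *v x)"
    by (simp add: DeltaR_Cons matrix_vector_mul_assoc matrix_mul_assoc)
  then show ?thesis
    by (simp add: Cmat_mult_Dmat)
qed

lemma DeltaR_right_inverse: "\<exists>B. DeltaR r ** B = mat 1"
proof (induction r)
  case Nil
  show ?case by (auto simp: DeltaR_Nil)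
next
  case (Cons k r)
  then obtain B where B: "DeltaR r ** B = mat 1" by blast
  have "DeltaR (k # r) ** (Dmat k ** B) = DeltaR r ** ((Cmat k ** Dmat k) ** B)"
    by (simp add: DeltaR_Cons matrix_mul_assoc)
  also have "\<dots> = mat 1"
    by (simp add: Cmat_mult_Dmat B)
  finally show ?case by blast
qed

lemma DeltaR_uR_Cons: "DeltaR (k # r) *v uR (k # r) = DeltaR r *v uR r + deltaR r k"
  by (simp add: matrix_vector_right_distrib DeltaR_Cons_mult_Dmat DeltaR_mult_ev)

lemma DeltaR_uR_in_BR: "DeltaR r *v uR r \<in> BR r"
proof (induction r)
  case Nil
  show ?case by (simp add: DeltaR_Nil)
next
  case (Cons k r)
  then show ?case
    unfolding DeltaR_uR_Cons BR.simps by blast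
qed

lemma aR_eq_DeltaR_uR: "aR r i = DeltaR r *v uR r + deltaR r i"
proof (induction r arbitrary: i)
  case Nil
  show ?case by (simp add: DeltaR_Nil)
next
  case (Cons k r)
  then show ?case
    by (simp add: DeltaR_uR_Cons del: uR.simps)
qed

lemma aR_minus_ev_in_BR: "aR r i - ev i \<in> BR r"
proof (induction r arbitrary: i)
  case Nil
  show ?case by simp
next
  case (Cons k r)
  then show ?case
    by (cases "i = k") (auto intro: exI[of _ "aR r i - ev i"])
qed

lemma Mmat_mult_DeltaR: "Mmat w *v rv (DeltaR (rev w) *v x) = rv x"
proof -
  have M: "Mmat w = matrix_inv (of_int_mat (DeltaR (rev w)))"
    by (simp add: Mmat_def of_int_mat_def DeltaR_def delta_def)
  obtain B where "DeltaR (rev w) ** B = mat 1"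
    using DeltaR_right_inverse by blast
  then have "of_int_mat (DeltaR (rev w)) ** of_int_mat B = (mat 1 :: real^_^_)"
    by (metis of_int_mat_mult of_int_mat_mat_1)
  then have "invertible (of_int_mat (DeltaR (rev w)) :: real^_^_)"
    using invertible_right_inverse by blast
  then show ?thesis
    by (simp add: M rv_matrix_mult matrix_vector_mul_assoc matrix_inv_mult_left)
qed

theorem mainTheorem8:
  fixes w :: "'n::finite list" and j :: 'n
  shows "avec w j - ev j \<in> Bset w
       \<and> Mmat w *v rv (avec w j) = rv (uvec w + ev j)
       \<and> rv (uvec w + ev j) \<in> {rv (ev j) + Mmat w *v rv b | b. b \<in> Bset w}
       \<and> avec w j \<in> {delta w j + b | b. b \<in> Bset w}"
proof -
  let ?r = "rev w"
  let ?b = "DeltaR ?r *v uR ?r"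
  have b: "?b \<in> Bset w"
    by (simp add: Bset_def DeltaR_uR_in_BR)
  have a: "avec w j = DeltaR ?r *v (uvec w + ev j)"
    by (simp add: avec_def uvec_def aR_eq_DeltaR_uR matrix_vector_right_distrib DeltaR_mult_ev)
  have "avec w j - ev j \<in> Bset w"
    by (simp add: avec_def Bset_def aR_minus_ev_in_BR)
  moreover have "Mmat w *v rv (avec w j) = rv (uvec w + ev j)"
    by (simp add: a Mmat_mult_DeltaR)
  moreover have "rv (uvec w + ev j) = rv (ev j) + Mmat w *v rv ?b"
    by (simp add: Mmat_mult_DeltaR uvec_def rv_add add.commute)
  moreover have "avec w j = delta w j + ?b"
    by (simp add: avec_def delta_def aR_eq_DeltaR_uR)
  ultimately show ?thesis
    using b by blast
qed

end
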